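(* Let $(X,d)$ be a compact metric space and let $f_{1,\infty}=\{f_n\}_{n=1}^\infty$ be a sequence of continuous maps $f_n:X\to X$ which is $k$-periodic for some $k\in\mathbb{N}$, i.e. $f_{j+kl}=f_j$ for all $l\in\mathbb{N}$ and all $1\le j\le k$. Then the non-autonomous system $(X,f_{1,\infty})$ is strongly multi-sensitive if and only if the autonomous system $(X, f_k\circ\cdots\circ f_1)$ is strongly multi-sensitive. Likewise, $(X,f_{1,\infty})$ is $\mathcal{N}$-sensitive if and only if $(X, f_k\circ\cdots\circ f_1)$ is $\mathcal{N}$-sensitive.
   Context: For a sequence $f_{1,\infty}=\{f_n\}$ of continuous self-maps of a compact metric space $(X,d)$, write $f_i^n=f_{n+i-1}\circ\cdots\circ f_i$ and $f_i^0=\mathrm{id}$; an autonomous system $(X,f)$ is the case $f_n=f$ for all $n$. For $k\in\mathbb{N}$ the $k$-th iterate is $f_{1,\infty}^{[k]}=\{f^k_{k(n-1)+1}\}_{n=1}^\infty$ (so its $n$-fold composition starting at index $1$ is $f_1^{kn}$). For $V\subseteq X$ and $\delta>0$, $N_{f_{1,\infty}}(V,\delta)=\{n\in\mathbb{N}: \exists u,v\in V,\ d(f_1^n(u),f_1^n(v))>\delta\}$. For $\mathbf{v}=(v_1,\dots,v_r)\in\mathbb{N}^r$, $(X,f_{1,\infty})$ is multi-sensitive with respect to $\mathbf{v}$ if there is $\delta>0$ such that for all nonempty open $U_1,\dots,U_r\subseteq X$, $\bigcap_{i=1}^r N_{f_{1,\infty}^{[v_i]}}(U_i,\delta)\neq\varnothing$.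 The system is $\mathcal{N}$-sensitive if it is multi-sensitive with respect to $(1,2,\dots,n)$ for every $n\in\mathbb{N}$, and strongly multi-sensitive if it is multi-sensitive with respect to every vector in $\mathbb{N}^r$, for every $r\in\mathbb{N}$. *)

theory Defs
  imports "HOL-Analysis.Analysis"
begin

text \<open>Non-autonomous dynamical systems: a sequence f 1, f 2, ... of self-maps of a
compact metric space X (given as a compact subset of a metric space type; the value
f 0 is irrelevant).\<close>

primrec comp_seq :: "(nat \<Rightarrow> 'a \<Rightarrow> 'a) \<Rightarrow> nat \<Rightarrow> nat \<Rightarrow> 'a \<Rightarrow> 'a" where
  "comp_seq f i 0 = id"
| "comp_seq f i (Suc n) = f (i + n) \<circ> comp_seq f i n"

definition iter_seq :: "nat \<Rightarrow> (nat \<Rightarrow> 'a \<Rightarrow> 'a) \<Rightarrow> nat \<Rightarrow> 'a \<Rightarrow> 'a" where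
  "iter_seq k f = (\<lambda>n. comp_seq f (k * (n - 1) + 1) k)"

definition N_set :: "(nat \<Rightarrow> 'a::metric_space \<Rightarrow> 'a) \<Rightarrow> 'a set \<Rightarrow> real \<Rightarrow> nat set" where
  "N_set f V \<delta> = {n. n \<ge> 1 \<and> (\<exists>u\<in>V. \<exists>v\<in>V. dist (comp_seq f 1 n u) (comp_seq f 1 n v) > \<delta>)}"

definition multi_sensitive ::
  "'a::metric_space set \<Rightarrow> (nat \<Rightarrow> 'a \<Rightarrow> 'a) \<Rightarrow> nat list \<Rightarrow> bool" where
  "multi_sensitive X f vs \<longleftrightarrow>
     (\<exists>\<delta>>0. \<forall>Us. length Us = length vs \<longrightarrow>
        (\<forall>U\<in>set Us. openin (top_of_set X) U \<and> U \<noteq> {}) \<longrightarrow>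
        (\<Inter>i<length vs. N_set (iter_seq (vs ! i) f) (Us ! i) \<delta>) \<noteq> {})"

definition N_sensitive :: "'a::metric_space set \<Rightarrow> (nat \<Rightarrow> 'a \<Rightarrow> 'a) \<Rightarrow> bool" where
  "N_sensitive X f \<longleftrightarrow> (\<forall>n\<ge>1. multi_sensitive X f [1..<n+1])"

definition strongly_multi_sensitive ::
  "'a::metric_space set \<Rightarrow> (nat \<Rightarrow> 'a \<Rightarrow> 'a) \<Rightarrow> bool" where
  "strongly_multi_sensitive X f \<longleftrightarrow>
     (\<forall>vs. vs \<noteq> [] \<longrightarrow> (\<forall>v\<in>set vs. v \<ge> 1) \<longrightarrow> multi_sensitive X f vs)"

definition autonomous :: "('a \<Rightarrow> 'a) \<Rightarrow> nat \<Rightarrow> 'a \<Rightarrow> 'a" where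
  "autonomous g = (\<lambda>_. g)"

end

theory Submission
  imports Defs
begin

text \<open>The equivalence is purely combinatorial.
By periodicity, the composition of the first k m maps of the sequence is the m-th iterate
of g = f_k o ... o f_1. Hence the N-set of the v-th iterate of (X, g) is the N-set of
the (k v)-th iterate of the sequence, and it is mapped by n \<mapsto> k n into the N-set of the
v-th iterate of the sequence. The first fact turns multi-sensitivity of the sequence with
respect to k \<cdot> v into that of g with respect to v; the second turns multi-sensitivity of g
with respect to v into that of the sequence with respect to v. For N-sensitivity one
moreover passes from (1, ..., k n) to its subvector (k, 2k, ..., k n).\<close>

lemma comp_seq_add: "comp_seq f i (a + b) = comp_seq f (i + a) b \<circ> comp_seq f i a"
  by (induction b) (auto simp: add.assoc)

lemma comp_seq_iter_seq: "comp_seq (iter_seq v f) 1 n = comp_seq f 1 (v * n)"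
proof (induction n)
  case 0
  then show ?case by simp
next
  case (Suc n)
  have "comp_seq (iter_seq v f) 1 (Suc n) = comp_seq f (1 + v * n) v \<circ> comp_seq f 1 (v * n)"
    using Suc by (simp add: iter_seq_def add.commute)
  also have "\<dots> = comp_seq f 1 (v * Suc n)"
    using comp_seq_add[of f 1 "v * n" v] by (simp add: add.commute)
  finally show ?case .
qed

lemma comp_seq_autonomous: "comp_seq (autonomous g) i n = g ^^ n"
  by (induction n) (auto simp: autonomous_def)

lemma comp_seq_periodic_shift:
  assumes periodic: "\<And>j l. 1 \<le> j \<Longrightarrow> j \<le> k \<Longrightarrow> f (j + k * l) = f j"
    and "m \<le> k"
  shows "comp_seq f (1 + k * l) m = comp_seq f 1 m"
  using \<open>m \<le> k\<close>
proof (induction m)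
  case 0
  then show ?case by simp
next
  case (Suc m)
  have "f (1 + k * l + m) = f (1 + m)"
    using periodic[of "1 + m" l] Suc.prems by (simp add: ac_simps)
  then show ?case
    using Suc by simp
qed

lemma comp_seq_periodic_mult:
  assumes periodic: "\<And>j l. 1 \<le> j \<Longrightarrow> j \<le> k \<Longrightarrow> f (j + k * l) = f j"
  shows "comp_seq f 1 (k * m) = comp_seq f 1 k ^^ m"
proof (induction m)
  case 0
  then show ?case by simp
next
  case (Suc m)
  have "comp_seq f 1 (k * Suc m) = comp_seq f (1 + k * m) k \<circ> comp_seq f 1 (k * m)"
    using comp_seq_add[of f 1 "k * m" k] by (simp add: add.commute)
  also have "\<dots> = comp_seq f 1 k \<circ> comp_seq f 1 k ^^ m"
    using comp_seq_periodic_shift[of k f, OF periodic] Suc.IH by simp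
  finally show ?case
    by simp
qed

lemma N_set_iter_seq:
  assumes "v \<ge> 1"
  shows "n \<in> N_set (iter_seq v f) U \<delta> \<longleftrightarrow> v * n \<in> N_set f U \<delta>"
  using assms unfolding N_set_def comp_seq_iter_seq by simp

lemma N_set_autonomous_periodic:
  assumes periodic: "\<And>j l. 1 \<le> j \<Longrightarrow> j \<le> k \<Longrightarrow> f (j + k * l) = f j"
    and "k \<ge> 1"
  shows "m \<in> N_set (autonomous (comp_seq f 1 k)) U \<delta> \<longleftrightarrow> k * m \<in> N_set f U \<delta>"
proof -
  have "comp_seq (autonomous (comp_seq f 1 k)) 1 m = comp_seq f 1 (k * m)"
    using comp_seq_periodic_mult[of k f m] periodic by (simp add: comp_seq_autonomous)
  then show ?thesis
    using \<open>k \<ge> 1\<close> unfolding N_set_def by simp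
qed

lemma N_set_iter_seq_autonomous_periodic:
  assumes periodic: "\<And>j l. 1 \<le> j \<Longrightarrow> j \<le> k \<Longrightarrow> f (j + k * l) = f j"
    and "k \<ge> 1" and "v \<ge> 1"
  shows N_set_iter_seq_autonomous_periodic_scaled:
      "n \<in> N_set (iter_seq v (autonomous (comp_seq f 1 k))) U \<delta>
         \<longleftrightarrow> n \<in> N_set (iter_seq (k * v) f) U \<delta>"
    and N_set_iter_seq_autonomous_periodic_mult:
      "n \<in> N_set (iter_seq v (autonomous (comp_seq f 1 k))) U \<delta>
         \<longleftrightarrow> k * n \<in> N_set (iter_seq v f) U \<delta>"
proof -
  have "n \<in> N_set (iter_seq v (autonomous (comp_seq f 1 k))) U \<delta>
      \<longleftrightarrow> v * n \<in> N_set (autonomous (comp_seq f 1 k)) U \<delta>"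
    by (rule N_set_iter_seq[OF \<open>v \<ge> 1\<close>])
  also have "\<dots> \<longleftrightarrow> k * (v * n) \<in> N_set f U \<delta>"
    by (rule N_set_autonomous_periodic[of k f, OF periodic \<open>k \<ge> 1\<close>])
  finally have F: "n \<in> N_set (iter_seq v (autonomous (comp_seq f 1 k))) U \<delta>
      \<longleftrightarrow> k * (v * n) \<in> N_set f U \<delta>" .
  have "k * v \<ge> 1"
    using assms by simp
  then show "n \<in> N_set (iter_seq v (autonomous (comp_seq f 1 k))) U \<delta>
      \<longleftrightarrow> n \<in> N_set (iter_seq (k * v) f) U \<delta>"
    using F N_set_iter_seq[of "k * v" n f U \<delta>] by (simp add: ac_simps)
  show "n \<in> N_set (iter_seq v (autonomous (comp_seq f 1 k))) U \<delta>
      \<longleftrightarrow> k * n \<in> N_set (iter_seq v f) U \<delta>"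
    using F N_set_iter_seq[OF \<open>v \<ge> 1\<close>, of "k * n" f U \<delta>] by (simp add: ac_simps)
qed

lemma multi_sensitive_transfer:
  assumes "multi_sensitive X f ws" and "length vs = length ws"
    and "\<And>i n U \<delta>. i < length ws \<Longrightarrow> n \<in> N_set (iter_seq (ws ! i) f) U \<delta>
           \<Longrightarrow> h n \<in> N_set (iter_seq (vs ! i) g) U \<delta>"
  shows "multi_sensitive X g vs"
proof -
  from assms(1) obtain \<delta> where "\<delta> > 0" and sens: "\<And>Us. length Us = length ws \<Longrightarrow>
      \<forall>U\<in>set Us. openin (top_of_set X) U \<and> U \<noteq> {} \<Longrightarrow>
      (\<Inter>i<length ws. N_set (iter_seq (ws ! i) f) (Us ! i) \<delta>) \<noteq> {}"
    unfolding multi_sensitive_def by blast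
  have "(\<Inter>i<length vs. N_set (iter_seq (vs ! i) g) (Us ! i) \<delta>) \<noteq> {}"
    if "length Us = length vs" and "\<forall>U\<in>set Us. openin (top_of_set X) U \<and> U \<noteq> {}" for Us
  proof -
    have "(\<Inter>i<length ws. N_set (iter_seq (ws ! i) f) (Us ! i) \<delta>) \<noteq> {}"
      using sens[of Us] that assms(2) by simp
    then obtain n where "n \<in> (\<Inter>i<length ws. N_set (iter_seq (ws ! i) f) (Us ! i) \<delta>)"
      by blast
    then have "h n \<in> (\<Inter>i<length vs. N_set (iter_seq (vs ! i) g) (Us ! i) \<delta>)"
      using assms(2,3) by simp
    then show ?thesis
      by blast
  qed
  with \<open>\<delta> > 0\<close> show ?thesis
    unfolding multi_sensitive_def by blast
qed

lemma multi_sensitive_subvector: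
  assumes "multi_sensitive X f ws" and "distinct vs" and "set vs \<subseteq> set ws"
  shows "multi_sensitive X f vs"
proof -
  from assms(1) obtain \<delta> where "\<delta> > 0" and sens: "\<And>Us. length Us = length ws \<Longrightarrow>
      \<forall>U\<in>set Us. openin (top_of_set X) U \<and> U \<noteq> {} \<Longrightarrow>
      (\<Inter>i<length ws. N_set (iter_seq (ws ! i) f) (Us ! i) \<delta>) \<noteq> {}"
    unfolding multi_sensitive_def by blast
  have "(\<Inter>i<length vs. N_set (iter_seq (vs ! i) f) (Us ! i) \<delta>) \<noteq> {}"
    if len: "length Us = length vs" and opn: "\<forall>U\<in>set Us. openin (top_of_set X) U \<and> U \<noteq> {}"
    for Us
  proof (cases "vs = []")
    case True
    then show ?thesis
      by simp
  next
    case False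
    \<comment> \<open>Distinctness of vs makes the set attached to a value well defined; values of ws
      outside vs get an arbitrary set of the list.\<close>
    define U_of where "U_of w = (case map_of (zip vs Us) w of Some U \<Rightarrow> U | None \<Rightarrow> hd Us)" for w
    have U_of_nth: "U_of (vs ! i) = Us ! i" if "i < length vs" for i
      using map_of_zip_nth[of vs Us i] len that assms(2) by (simp add: U_of_def)
    have "U_of w \<in> set Us" for w
      using False len
      by (auto intro: hd_in_set simp: U_of_def split: option.split dest: map_of_SomeD set_zip_rightD)
    then have "(\<Inter>j<length ws. N_set (iter_seq (ws ! j) f) (U_of (ws ! j)) \<delta>) \<noteq> {}"
      using sens[of "map U_of ws"] opn by auto
    then obtain n where n: "\<And>j. j < length ws \<Longrightarrow> n \<in> N_set (iter_seq (ws ! j) f) (U_of (ws ! j)) \<delta>"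
      by blast
    have "n \<in> N_set (iter_seq (vs ! i) f) (Us ! i) \<delta>" if i: "i < length vs" for i
    proof -
      obtain j where "j < length ws" "ws ! j = vs ! i"
        using assms(3) nth_mem[OF i] by (metis in_set_conv_nth subsetD)
      then show ?thesis
        using n U_of_nth[OF i] by metis
    qed
    then show ?thesis
      by blast
  qed
  with \<open>\<delta> > 0\<close> show ?thesis
    unfolding multi_sensitive_def by blast
qed

lemma multi_sensitive_autonomous_periodic_if_scaled:
  assumes periodic: "\<And>j l. 1 \<le> j \<Longrightarrow> j \<le> k \<Longrightarrow> f (j + k * l) = f j"
    and "k \<ge> 1" and "\<forall>v\<in>set vs. v \<ge> 1"
    and "multi_sensitive X f (map ((*) k) vs)"
  shows "multi_sensitive X (autonomous (comp_seq f 1 k)) vs"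
proof (rule multi_sensitive_transfer[where h = id, OF assms(4)])
  fix i n U \<delta>
  assume "i < length (map ((*) k) vs)" and "n \<in> N_set (iter_seq (map ((*) k) vs ! i) f) U \<delta>"
  then show "id n \<in> N_set (iter_seq (vs ! i) (autonomous (comp_seq f 1 k))) U \<delta>"
    using N_set_iter_seq_autonomous_periodic_scaled[of k f "vs ! i", OF periodic] assms(2,3)
    by simp
qed simp

lemma multi_sensitive_periodic_if_autonomous:
  assumes periodic: "\<And>j l. 1 \<le> j \<Longrightarrow> j \<le> k \<Longrightarrow> f (j + k * l) = f j"
    and "k \<ge> 1" and "\<forall>v\<in>set vs. v \<ge> 1"
    and "multi_sensitive X (autonomous (comp_seq f 1 k)) vs"
  shows "multi_sensitive X f vs"
proof (rule multi_sensitive_transfer[where h = "(*) k", OF assms(4)])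
  fix i n U \<delta>
  assume "i < length vs" and "n \<in> N_set (iter_seq (vs ! i) (autonomous (comp_seq f 1 k))) U \<delta>"
  then show "k * n \<in> N_set (iter_seq (vs ! i) f) U \<delta>"
    using N_set_iter_seq_autonomous_periodic_mult[of k f "vs ! i", OF periodic] assms(2,3)
    by simp
qed simp

theorem mainTheorem1:
  fixes X :: "'a::metric_space set" and f :: "nat \<Rightarrow> 'a \<Rightarrow> 'a" and k :: nat
  assumes "compact X"
    and "\<And>n. n \<ge> 1 \<Longrightarrow> continuous_on X (f n)"
    and "\<And>n. n \<ge> 1 \<Longrightarrow> f n ` X \<subseteq> X"
    and "k \<ge> 1"
    and "\<And>j l. 1 \<le> j \<Longrightarrow> j \<le> k \<Longrightarrow> f (j + k * l) = f j"
  shows "(strongly_multi_sensitive X f \<longleftrightarrow>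
            strongly_multi_sensitive X (autonomous (comp_seq f 1 k)))
       \<and> (N_sensitive X f \<longleftrightarrow> N_sensitive X (autonomous (comp_seq f 1 k)))"
proof -
  note from_seq = multi_sensitive_autonomous_periodic_if_scaled[of k f, OF assms(5,4)]
  note to_seq = multi_sensitive_periodic_if_autonomous[of k f, OF assms(5,4)]
  have "strongly_multi_sensitive X f \<longleftrightarrow> strongly_multi_sensitive X (autonomous (comp_seq f 1 k))"
    using from_seq to_seq assms(4) unfolding strongly_multi_sensitive_def by force
  moreover have "multi_sensitive X (autonomous (comp_seq f 1 k)) [1..<n + 1]"
    if "N_sensitive X f" and "n \<ge> 1" for n
  proof (rule from_seq)
    have "multi_sensitive X f [1..<k * n + 1]"
      using that assms(4) unfolding N_sensitive_def by simp
    moreover have "distinct (map ((*) k) [1..<n + 1])"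
      using assms(4) by (simp add: distinct_map inj_on_def)
    moreover have "set (map ((*) k) [1..<n + 1]) \<subseteq> set [1..<k * n + 1]"
      using assms(4) by auto
    ultimately show "multi_sensitive X f (map ((*) k) [1..<n + 1])"
      by (rule multi_sensitive_subvector)
  qed auto
  moreover have "N_sensitive X (autonomous (comp_seq f 1 k)) \<Longrightarrow> N_sensitive X f"
    using to_seq unfolding N_sensitive_def by simp
  ultimately show ?thesis
    unfolding N_sensitive_def by blast
qed

end
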